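(* Let $q$ be a prime power, let $X^2+\mu X+\lambda$ be a primitive polynomial over $\mathbb F_q$, let $\bar x\in PGL_2(q)$ be the image of $\begin{pmatrix}0&1\\-\lambda&-\mu\end{pmatrix}$, $C=\langle\bar x\rangle$, and let $S\le PGL_2(q)$ be the image of the invertible upper triangular matrices. For the right action of $S$ on $C$ defined by $cs=s'c^{[s]}$ ($s'\in S$, $c^{[s]}\in C$), the stabilizer $\mathrm{Stab}_S(\bar x)=\{s\in S:\bar x^{[s]}=\bar x\}$ is isomorphic to the cyclic group $\mathbb Z_{q-1}$.
   Context: $PGL_2(q)=CS$ with $C\cap S=1$, so each product $cs$ ($c\in C$, $s\in S$) is uniquely $s'c'$ with $s'\in S$, $c'\in C$; $c^{[s]}:=c'$. *)

theory Defs
  imports "HOL-Analysis.Analysis" "HOL-Algebra.Elementary_Groups"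
    "HOL-Computational_Algebra.Polynomial"
begin

definition mat2 :: "'a \<Rightarrow> 'a \<Rightarrow> 'a \<Rightarrow> 'a \<Rightarrow> 'a::zero ^2^2" where
  "mat2 a b c d = (\<chi> i j. if i = 1 then (if j = 1 then a else b) else (if j = 1 then c else d))"

definition GL2 :: "('a::field ^2^2) set" where
  "GL2 = {A. det A \<noteq> 0}"

definition pgl_of :: "'a::field ^2^2 \<Rightarrow> ('a ^2^2) set" where
  "pgl_of A = {(\<chi> i j. c * A $ i $ j) | c. c \<noteq> 0}"

definition PGL2 :: "('a::field ^2^2) set monoid" where
  "PGL2 = \<lparr> carrier = pgl_of ` GL2,
            mult = (\<lambda>X Y. {A ** B | A B. A \<in> X \<and> B \<in> Y}),
            one = pgl_of (mat 1) \<rparr>"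

definition upper_tri_PGL2 :: "('a::field ^2^2) set set" where
  "upper_tri_PGL2 = pgl_of ` {A \<in> GL2. A $ 2 $ 1 = 0}"

text \<open>Primitive polynomial over F_q (q = CARD('a)): monic, irreducible, and a root
  (the class of X in F_q[X]/(f)) has multiplicative order q^deg f - 1, i.e.
  generates the multiplicative group of the extension field F_q[X]/(f).\<close>
definition primitive_poly :: "'a::{finite,field} poly \<Rightarrow> bool" where
  "primitive_poly f \<longleftrightarrow> lead_coeff f = 1 \<and> irreducible f \<and>
     (let N = CARD('a) ^ degree f - 1 in
        f dvd (monom 1 N - 1) \<and> (\<forall>e. 0 < e \<and> e < N \<longrightarrow> \<not> f dvd (monom 1 e - 1)))"

definition twist :: "('g, 'b) monoid_scheme \<Rightarrow> 'g set \<Rightarrow> 'g set \<Rightarrow> 'g \<Rightarrow> 'g \<Rightarrow> 'g" where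
  "twist G C S c s = (THE c'. c' \<in> C \<and> (\<exists>s'\<in>S. c \<otimes>\<^bsub>G\<^esub> s = s' \<otimes>\<^bsub>G\<^esub> c'))"

end

theory Submission
  imports Defs "HOL-Algebra.Multiplicative_Group" "HOL-Algebra.Algebraic_Closure_Type"
begin

text \<open>
  With \<open>X\<close> the companion matrix of \<open>f = x\<^sup>2 + \<mu>x + \<lambda>\<close>, the matrices \<open>b\<cdot>1 + a\<cdot>X\<close> form a
  copy of the field \<open>\<bbbF>\<^sub>q[x]/(f)\<close> with \<open>q\<^sup>2\<close> elements. As \<open>f\<close> is primitive, the powers of \<open>x\<close>
  exhaust its nonzero elements, so \<open>C\<close> consists of the classes of all nonzero \<open>b\<cdot>1 + a\<cdot>X\<close>.
  Every invertible matrix is an upper triangular matrix times the \<open>b\<cdot>1 + a\<cdot>X\<close> with the same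
  bottom row, and \<open>C \<inter> S = 1\<close>; hence \<open>c\<^bsup>[s]\<^esup>\<close> is well defined, and \<open>x\<^bsup>[s]\<^esup> = x\<close> iff
  \<open>x s x\<^sup>-\<^sup>1 \<in> S\<close>. For \<open>s = [[a, b], [0, d]]\<close> this means \<open>\<lambda>b = \<mu>(a - d)\<close>, so the stabilizer is
  the image of \<open>u \<mapsto> [[u, \<mu>(u - 1)/\<lambda>], [0, 1]]\<close>, an isomorphic copy of the cyclic group
  \<open>\<bbbF>\<^sub>q\<^sup>*\<close>.
\<close>

section \<open>The twisted action\<close>

lemma (in group) twist_eqI:
  assumes "subgroup C G" "subgroup S G" "C \<inter> S \<subseteq> {\<one>}"
    and "c' \<in> C" "s' \<in> S" "c \<otimes> s = s' \<otimes> c'"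
  shows "twist G C S c s = c'"
  unfolding twist_def
proof (rule the_equality)
  show "c' \<in> C \<and> (\<exists>s'\<in>S. c \<otimes> s = s' \<otimes> c')" using assms(4-6) by blast
next
  fix c'' assume "c'' \<in> C \<and> (\<exists>s''\<in>S. c \<otimes> s = s'' \<otimes> c'')"
  then obtain s'' where c'': "c'' \<in> C" and s'': "s'' \<in> S" and eq: "s' \<otimes> c' = s'' \<otimes> c''"
    using assms(6) by auto
  have carr: "c' \<in> carrier G" "c'' \<in> carrier G" "s' \<in> carrier G" "s'' \<in> carrier G"
    using assms c'' s'' subgroup.subset by blast+
  have "inv s'' \<otimes> s' = c'' \<otimes> inv c'"
  proof -
    have "inv s'' \<otimes> s' \<otimes> c' = c''"
      using carr by (simp add: m_assoc eq flip: m_assoc[of "inv s''"])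
    then show ?thesis using carr by (metis inv_solve_right inv_closed m_closed)
  qed
  moreover have "inv s'' \<otimes> s' \<in> S" "c'' \<otimes> inv c' \<in> C"
    using assms s'' c'' by (auto intro: subgroup.m_closed subgroup.m_inv_closed)
  ultimately have "c'' \<otimes> inv c' = \<one>" using assms(3) by auto
  then show "c'' = c'" using carr by (simp add: inv_solve_right')
qed

lemma (in group) twist_eq_self_iff:
  assumes "subgroup C G" "subgroup S G" "C \<inter> S \<subseteq> {\<one>}" "c \<in> C" "s \<in> S"
    and "\<exists>s'\<in>S. \<exists>c'\<in>C. c \<otimes> s = s' \<otimes> c'"
  shows "twist G C S c s = c \<longleftrightarrow> c \<otimes> s \<otimes> inv c \<in> S"
proof -
  obtain s' c' where s': "s' \<in> S" and c': "c' \<in> C" and eq: "c \<otimes> s = s' \<otimes> c'"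
    using assms(6) by blast
  have carr: "c \<in> carrier G" "s \<in> carrier G"
    using assms subgroup.subset by blast+
  have conj: "c \<otimes> s = (c \<otimes> s \<otimes> inv c) \<otimes> c"
    using carr by (simp add: m_assoc)
  show ?thesis
  proof
    assume "twist G C S c s = c"
    then have "c' = c" using twist_eqI[OF assms(1-3) c' s' eq] by simp
    then show "c \<otimes> s \<otimes> inv c \<in> S" using eq s' carr assms(2)
      by (metis inv_solve_right m_closed subgroup.mem_carrier)
  next
    assume "c \<otimes> s \<otimes> inv c \<in> S"
    then show "twist G C S c s = c" by (rule twist_eqI[OF assms(1-4) _ conj])
  qed
qed


section \<open>Finite cyclic groups\<close>

lemma (in group) integer_mod_group_iso_cyclic:
  assumes g: "g \<in> carrier G" and gen: "carrier G = range (\<lambda>k::int. g [^] k)"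
  shows "(\<lambda>k::int. g [^] k) \<in> iso (integer_mod_group (ord g)) G"
proof -
  let ?n = "int (ord g)"
  have pow_mod: "g [^] (k mod ?n) = g [^] k" for k :: int
    using g by (simp add: int_pow_eq flip: mod_eq_dvd_iff)
  have mod_self: "k mod ?n = k" if "k \<in> carrier (integer_mod_group (ord g))" for k
    using that by (auto simp: carrier_integer_mod_group split: if_splits)
  show ?thesis
  proof (rule isoI)
    show "(\<lambda>k::int. g [^] k) \<in> hom (integer_mod_group (ord g)) G"
      by (rule homI) (use g in \<open>simp_all add: pow_mod int_pow_mult\<close>)
    show "bij_betw (\<lambda>k::int. g [^] k) (carrier (integer_mod_group (ord g))) (carrier G)"
    proof (rule bij_betw_imageI)
      show "inj_on (\<lambda>k::int. g [^] k) (carrier (integer_mod_group (ord g)))"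
      proof (rule inj_onI)
        fix k l assume k: "k \<in> carrier (integer_mod_group (ord g))"
          and l: "l \<in> carrier (integer_mod_group (ord g))" and eq: "g [^] k = g [^] l"
        then have "?n dvd l - k" using g by (simp add: int_pow_eq)
        then have "k mod ?n = l mod ?n" by (simp add: mod_eq_dvd_iff dvd_diff_commute)
        then show "k = l" using mod_self[OF k] mod_self[OF l] by simp
      qed
      show "(\<lambda>k::int. g [^] k) ` carrier (integer_mod_group (ord g)) = carrier G"
      proof
        show "(\<lambda>k::int. g [^] k) ` carrier (integer_mod_group (ord g)) \<subseteq> carrier G"
          using g by auto
        show "carrier G \<subseteq> (\<lambda>k::int. g [^] k) ` carrier (integer_mod_group (ord g))"
        proof
          fix x assume "x \<in> carrier G"
          then obtain k where "x = g [^] (k mod ?n)" using gen pow_mod by auto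
          moreover have "k mod ?n \<in> carrier (integer_mod_group (ord g))"
            by (auto simp: carrier_integer_mod_group)
          ultimately show "x \<in> (\<lambda>k::int. g [^] k) ` carrier (integer_mod_group (ord g))"
            by blast
        qed
      qed
    qed
  qed
qed

text \<open>\<open>mult_of\<close> is qualified because \<open>Algebraic_Closure_Type\<close> also brings in the identical
  copy from \<open>Ring_Divisibility\<close>.\<close>

lemma (in field) integer_mod_group_iso_mult_of:
  assumes fin: "finite (carrier R)"
  shows "integer_mod_group (order R - 1) \<cong> Multiplicative_Group.mult_of R"
proof -
  interpret M: group "Multiplicative_Group.mult_of R" by (rule field_mult_group)
  obtain a where a: "a \<in> carrier (Multiplicative_Group.mult_of R)"
    and gen: "carrier (Multiplicative_Group.mult_of R) = {a [^] i | i::nat. i \<in> UNIV}"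
    using finite_field_mult_group_has_gen[OF fin] by blast
  have pow_eq: "a [^]\<^bsub>R\<^esub> i = a [^]\<^bsub>Multiplicative_Group.mult_of R\<^esub> int i" for i :: nat
    by (simp add: int_pow_int Multiplicative_Group.nat_pow_mult_of)
  have gen_int: "carrier (Multiplicative_Group.mult_of R)
      = range (\<lambda>k::int. a [^]\<^bsub>Multiplicative_Group.mult_of R\<^esub> k)"
  proof
    show "carrier (Multiplicative_Group.mult_of R)
        \<subseteq> range (\<lambda>k::int. a [^]\<^bsub>Multiplicative_Group.mult_of R\<^esub> k)"
      using gen by (auto simp: pow_eq)
  qed (use a M.int_pow_closed in blast)
  have "M.ord a = order (Multiplicative_Group.mult_of R)"
    using M.cyclic_order_is_ord[OF a] M.carrier_subgroup_generated_by_singleton[OF a] gen_int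
    by (simp add: order_def)
  also have "\<dots> = order R - 1" by (rule order_mult_of[OF fin])
  finally show ?thesis
    using M.integer_mod_group_iso_cyclic[OF a gen_int] by (auto intro: is_isoI)
qed

section \<open>\<open>PGL\<^sub>2\<close> of a field\<close>

lemma mat2_nth [simp]:
  "mat2 a b c d $ 1 $ 1 = a" "mat2 a b c d $ 1 $ 2 = b"
  "mat2 a b c d $ 2 $ 1 = c" "mat2 a b c d $ 2 $ 2 = d"
  by (simp_all add: mat2_def)

lemma mat2_cases:
  obtains a b c d where "A = mat2 a b c d"
proof
  show "A = mat2 (A$1$1) (A$1$2) (A$2$1) (A$2$2)"
    by (simp add: mat2_def vec_eq_iff forall_2)
qed

lemma mat2_eq_iff [simp]:
  "mat2 a b c d = mat2 a' b' c' d' \<longleftrightarrow> a = a' \<and> b = b' \<and> c = c' \<and> d = d'"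
  by (metis mat2_nth)

lemma mat2_mult:
  "mat2 a b c d ** mat2 a' b' c' d' =
   mat2 (a*a' + b*c') (a*b' + b*d') (c*a' + d*c') (c*b' + (d::'a::comm_ring_1)*d')"
  by (simp add: mat2_def matrix_matrix_mult_def vec_eq_iff forall_2 sum_2)

lemma det_mat2: "det (mat2 a b c (d::'a::comm_ring_1)) = a*d - b*c"
  by (simp add: det_2)

lemma mat_1_eq_mat2: "(mat 1 :: 'a::comm_ring_1^2^2) = mat2 1 0 0 1"
  by (simp add: mat2_def mat_def vec_eq_iff forall_2)

definition smult_mat :: "'a::times \<Rightarrow> 'a^'n^'m \<Rightarrow> 'a^'n^'m" where
  "smult_mat c A = (\<chi> i j. c * A $ i $ j)"

lemma smult_mat_mat2: "smult_mat k (mat2 a b c d) = mat2 (k*a) (k*b) (k*c) (k*d)"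
  by (simp add: smult_mat_def mat2_def vec_eq_iff forall_2)

lemma smult_mat_1 [simp]: "smult_mat 1 A = (A :: 'a::monoid_mult^'n^'m)"
  by (simp add: smult_mat_def vec_eq_iff)

lemma smult_mat_smult_mat [simp]:
  "smult_mat c (smult_mat d A) = smult_mat (c * d) (A :: 'a::semigroup_mult^'n^'m)"
  by (simp add: smult_mat_def vec_eq_iff mult.assoc)

lemma smult_mat_mult_left: "smult_mat c A ** B = smult_mat c (A ** (B :: 'a::comm_ring_1^_^_))"
  by (simp add: smult_mat_def matrix_matrix_mult_def vec_eq_iff sum_distrib_left mult_ac)

lemma smult_mat_mult_right: "A ** smult_mat c B = smult_mat c (A ** (B :: 'a::comm_ring_1^_^_))"
  by (simp add: smult_mat_def matrix_matrix_mult_def vec_eq_iff sum_distrib_left mult_ac)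

lemma mem_pgl_of_iff: "M \<in> pgl_of A \<longleftrightarrow> (\<exists>c. c \<noteq> 0 \<and> M = smult_mat c A)"
  by (auto simp: pgl_of_def smult_mat_def)

lemma self_mem_pgl_of: "(A :: 'a::field^2^2) \<in> pgl_of A"
  unfolding mem_pgl_of_iff by (intro exI[of _ 1]) simp

lemma pgl_of_smult_mat:
  assumes "c \<noteq> 0"
  shows "pgl_of (smult_mat c A) = pgl_of A"
proof (intro equalityI subsetI)
  fix M assume "M \<in> pgl_of (smult_mat c A)"
  then obtain d where "d \<noteq> 0" "M = smult_mat (d * c) A" by (auto simp: mem_pgl_of_iff)
  then show "M \<in> pgl_of A" using assms unfolding mem_pgl_of_iff by (intro exI[of _ "d * c"]) simp
next
  fix M assume "M \<in> pgl_of A"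
  then obtain d where "d \<noteq> 0" "M = smult_mat (d / c * c) A" using assms by (auto simp: mem_pgl_of_iff)
  then show "M \<in> pgl_of (smult_mat c A)" using assms unfolding mem_pgl_of_iff
    by (intro exI[of _ "d / c"]) simp
qed

lemma pgl_of_eq_iff: "pgl_of A = pgl_of B \<longleftrightarrow> (\<exists>c. c \<noteq> 0 \<and> A = smult_mat c B)"
proof
  assume "pgl_of A = pgl_of B"
  with self_mem_pgl_of[of A] show "\<exists>c. c \<noteq> 0 \<and> A = smult_mat c B" by (simp add: mem_pgl_of_iff)
qed (auto simp: pgl_of_smult_mat)

lemma carrier_PGL2: "carrier PGL2 = pgl_of ` GL2"
  by (simp add: PGL2_def)

lemma one_PGL2: "\<one>\<^bsub>PGL2\<^esub> = pgl_of (mat 1)"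
  by (simp add: PGL2_def)

lemma PGL2_mult_pgl_of: "pgl_of A \<otimes>\<^bsub>PGL2\<^esub> pgl_of B = pgl_of (A ** B)"
proof -
  have "{A' ** B' | A' B'. A' \<in> pgl_of A \<and> B' \<in> pgl_of B} = pgl_of (A ** B)"
  proof (intro equalityI subsetI)
    fix M assume "M \<in> {A' ** B' | A' B'. A' \<in> pgl_of A \<and> B' \<in> pgl_of B}"
    then obtain c d where "c \<noteq> 0" "d \<noteq> 0" "M = smult_mat (c * d) (A ** B)"
      by (auto simp: mem_pgl_of_iff smult_mat_mult_left smult_mat_mult_right mult.commute)
    then show "M \<in> pgl_of (A ** B)" unfolding mem_pgl_of_iff by (intro exI[of _ "c * d"]) simp
  next
    fix M assume "M \<in> pgl_of (A ** B)"
    then obtain c where "c \<noteq> 0" "M = smult_mat c A ** B"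
      by (auto simp: mem_pgl_of_iff smult_mat_mult_left)
    then show "M \<in> {A' ** B' | A' B'. A' \<in> pgl_of A \<and> B' \<in> pgl_of B}"
      using self_mem_pgl_of[of B] by (auto simp: mem_pgl_of_iff)
  qed
  then show ?thesis by (simp add: PGL2_def)
qed

definition adj2 :: "'a::comm_ring_1^2^2 \<Rightarrow> 'a^2^2" where
  "adj2 A = mat2 (A$2$2) (- A$1$2) (- A$2$1) (A$1$1)"

lemma adj2_mult: "adj2 A ** A = smult_mat (det A) (mat 1)"
  by (cases A rule: mat2_cases)
    (simp add: adj2_def mat2_mult det_mat2 mat_1_eq_mat2 smult_mat_mat2 algebra_simps)

lemma det_adj2: "det (adj2 A) = det A"
  by (simp add: adj2_def det_2)

lemma group_PGL2: "group (PGL2 :: ('a::field^2^2) set monoid)"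
proof (rule groupI)
  fix x assume "x \<in> carrier (PGL2 :: ('a^2^2) set monoid)"
  then obtain A :: "'a^2^2" where A: "x = pgl_of A" "det A \<noteq> 0" by (auto simp: carrier_PGL2 GL2_def)
  show "\<exists>y\<in>carrier PGL2. y \<otimes>\<^bsub>PGL2\<^esub> x = \<one>\<^bsub>PGL2\<^esub>"
  proof
    show "pgl_of (adj2 A) \<otimes>\<^bsub>PGL2\<^esub> x = \<one>\<^bsub>PGL2\<^esub>"
      using A by (simp add: PGL2_mult_pgl_of one_PGL2 adj2_mult pgl_of_smult_mat)
    show "pgl_of (adj2 A) \<in> carrier PGL2"
      using A by (simp add: carrier_PGL2 GL2_def det_adj2)
  qed
qed (auto simp: carrier_PGL2 one_PGL2 GL2_def PGL2_mult_pgl_of det_mul matrix_mul_assoc)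

lemma finite_carrier_PGL2: "finite (carrier (PGL2 :: ('a::{finite,field}^2^2) set monoid))"
  by (simp add: carrier_PGL2)

lemma inv_PGL2_pgl_of:
  assumes "det A \<noteq> 0"
  shows "inv\<^bsub>PGL2\<^esub> (pgl_of A) = pgl_of (adj2 A)"
  using assms
  by (intro group.inv_equality[OF group_PGL2])
    (simp_all add: PGL2_mult_pgl_of one_PGL2 adj2_mult pgl_of_smult_mat carrier_PGL2 GL2_def det_adj2)

lemma pgl_of_in_upper_tri_PGL2_iff:
  assumes "det A \<noteq> 0"
  shows "pgl_of A \<in> upper_tri_PGL2 \<longleftrightarrow> A $ 2 $ 1 = 0"
proof
  assume "pgl_of A \<in> upper_tri_PGL2"
  then obtain B :: "'a^2^2" and c where "B $ 2 $ 1 = 0" "A = smult_mat c B"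
    by (auto simp: upper_tri_PGL2_def pgl_of_eq_iff)
  then show "A $ 2 $ 1 = 0" by (simp add: smult_mat_def)
qed (use assms in \<open>auto simp: upper_tri_PGL2_def GL2_def\<close>)

lemma subgroup_upper_tri_PGL2: "subgroup upper_tri_PGL2 (PGL2 :: ('a::field^2^2) set monoid)"
proof (rule group.subgroupI[OF group_PGL2])
  show "upper_tri_PGL2 \<subseteq> carrier (PGL2 :: ('a^2^2) set monoid)"
    by (auto simp: upper_tri_PGL2_def carrier_PGL2)
  show "upper_tri_PGL2 \<noteq> ({} :: ('a^2^2) set set)"
    using pgl_of_in_upper_tri_PGL2_iff[of "mat 1 :: 'a^2^2"] by (auto simp: mat_1_eq_mat2 det_mat2)
next
  fix s :: "('a^2^2) set" assume "s \<in> upper_tri_PGL2"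
  then obtain A :: "'a^2^2" where "s = pgl_of A" "det A \<noteq> 0" "A $ 2 $ 1 = 0"
    by (auto simp: upper_tri_PGL2_def GL2_def)
  then show "inv\<^bsub>PGL2\<^esub> s \<in> upper_tri_PGL2"
    by (simp add: inv_PGL2_pgl_of pgl_of_in_upper_tri_PGL2_iff det_adj2) (simp add: adj2_def)
next
  fix s t :: "('a^2^2) set" assume "s \<in> upper_tri_PGL2" "t \<in> upper_tri_PGL2"
  then obtain A B :: "'a^2^2" where "s = pgl_of A" "det A \<noteq> 0" "A $ 2 $ 1 = 0"
    and "t = pgl_of B" "det B \<noteq> 0" "B $ 2 $ 1 = 0"
    by (auto simp: upper_tri_PGL2_def GL2_def)
  then show "s \<otimes>\<^bsub>PGL2\<^esub> t \<in> upper_tri_PGL2"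
    by (cases A rule: mat2_cases, cases B rule: mat2_cases)
      (simp add: PGL2_mult_pgl_of pgl_of_in_upper_tri_PGL2_iff det_mat2 mat2_mult)
qed

section \<open>Powers of \<open>x\<close> modulo \<open>x\<^sup>2 + \<mu>x + \<lambda>\<close>\<close>

text \<open>A pair \<open>(a, b)\<close> stands for the residue \<open>a x + b\<close>; \<open>mult_x\<close> is multiplication by \<open>x\<close>.\<close>

fun mult_x :: "'a::comm_ring_1 \<Rightarrow> 'a \<Rightarrow> 'a \<times> 'a \<Rightarrow> 'a \<times> 'a" where
  "mult_x lam mu (a, b) = (b - mu * a, - lam * a)"

definition xpow_coords :: "'a::comm_ring_1 \<Rightarrow> 'a \<Rightarrow> nat \<Rightarrow> 'a \<times> 'a" where
  "xpow_coords lam mu k = (mult_x lam mu ^^ k) (0, 1)"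

lemma xpow_coords_0 [simp]: "xpow_coords lam mu 0 = (0, 1)"
  by (simp add: xpow_coords_def)

lemma xpow_coords_Suc: "xpow_coords lam mu (Suc k) = mult_x lam mu (xpow_coords lam mu k)"
  by (simp add: xpow_coords_def)

lemma xpow_coords_add: "xpow_coords lam mu (k + m) = (mult_x lam mu ^^ m) (xpow_coords lam mu k)"
  by (simp only: xpow_coords_def add.commute[of k m] funpow_add comp_apply)

lemma xpow_mod:
  fixes lam mu :: "'a::field"
  shows "[:0, 1:] ^ k mod [:lam, mu, 1:] = (case xpow_coords lam mu k of (a, b) \<Rightarrow> [:b, a:])"
proof (induction k)
  case 0
  then show ?case by (simp add: mod_poly_less)
next
  case (Suc k)
  obtain a b where ab: "xpow_coords lam mu k = (a, b)" by fastforce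
  have "[:0, 1:] ^ Suc k mod [:lam, mu, 1:] = ([:0, 1:] * [:b, a:]) mod [:lam, mu, 1:]"
    using Suc ab by (metis (no_types) case_prod_conv mod_mult_right_eq power_Suc)
  also have "[:0, 1:] * [:b, a:] = [:- lam * a, b - mu * a:] + [:a:] * [:lam, mu, 1:]"
    by (simp add: algebra_simps)
  also have "\<dots> mod [:lam, mu, 1:] = [:- lam * a, b - mu * a:]"
    by (subst mod_mult_self1) (simp add: mod_poly_less)
  finally show ?case by (simp add: xpow_coords_Suc ab)
qed

lemma dvd_monom_minus_1_iff_xpow_coords:
  fixes lam mu :: "'a::field"
  shows "[:lam, mu, 1:] dvd Polynomial.monom 1 e - 1 \<longleftrightarrow> xpow_coords lam mu e = (0, 1)"
proof -
  have "[:lam, mu, 1:] dvd Polynomial.monom 1 e - 1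
      \<longleftrightarrow> [:0, 1:] ^ e mod [:lam, mu, 1:] = 1 mod [:lam, mu, 1:]"
    by (simp add: mod_eq_dvd_iff monom_altdef)
  also have "1 mod [:lam, mu, 1:] = 1"
    by (simp add: mod_poly_less)
  finally show ?thesis
    by (cases "xpow_coords lam mu e") (auto simp: xpow_mod one_pCons)
qed

lemma xpow_coords_nonzero:
  fixes lam mu :: "'a::field"
  assumes "lam \<noteq> 0"
  shows "xpow_coords lam mu k \<noteq> (0, 0)"
proof (induction k)
  case (Suc k)
  then show ?case
    using assms by (cases "xpow_coords lam mu k") (auto simp: xpow_coords_Suc)
qed simp

lemma two_le_card_field: "2 \<le> CARD('a::{finite,field})"
  using card_mono[of UNIV "{0::'a, 1}"] by simp

locale primitive_quadratic =
  fixes lam mu :: "'a::{finite,field}"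
  assumes primitive: "primitive_poly [:lam, mu, 1:]"
begin

lemma xpow_coords_order: "xpow_coords lam mu (CARD('a)^2 - 1) = (0, 1)"
  using primitive
  by (simp add: primitive_poly_def Let_def dvd_monom_minus_1_iff_xpow_coords power2_eq_square)

lemma xpow_coords_ne_one:
  "0 < e \<Longrightarrow> e < CARD('a)^2 - 1 \<Longrightarrow> xpow_coords lam mu e \<noteq> (0, 1)"
  using primitive
  by (simp add: primitive_poly_def Let_def dvd_monom_minus_1_iff_xpow_coords power2_eq_square)

lemma lam_nonzero: "lam \<noteq> 0"
proof
  assume "lam = 0"
  have "CARD('a)^2 - 1 \<noteq> 0"
    using power_mono[OF two_le_card_field[where 'a='a], of 2] by simp
  then obtain m where "CARD('a)^2 - 1 = Suc m" using not0_implies_Suc by blast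
  then show False
    using xpow_coords_order \<open>lam = 0\<close> by (cases "xpow_coords lam mu m") (simp add: xpow_coords_Suc)
qed

lemma inj_on_xpow_coords: "inj_on (xpow_coords lam mu) {..<CARD('a)^2 - 1}"
proof -
  have le: "j = k" if "j \<le> k" "k < CARD('a)^2 - 1" "xpow_coords lam mu j = xpow_coords lam mu k" for j k
  proof (rule ccontr)
    assume "j \<noteq> k"
    define e where "e = j + (CARD('a)^2 - 1 - k)"
    have "xpow_coords lam mu e = xpow_coords lam mu (k + (CARD('a)^2 - 1 - k))"
      unfolding e_def xpow_coords_add using that(3) by simp
    also have "\<dots> = (0, 1)" using that xpow_coords_order by simp
    finally have "xpow_coords lam mu e = (0, 1)" .
    moreover have "0 < e" "e < CARD('a)^2 - 1"
      using that \<open>j \<noteq> k\<close> by (auto simp: e_def)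
    ultimately show False
      using xpow_coords_ne_one by blast
  qed
  show ?thesis
  proof (rule inj_onI)
    fix j k assume "j \<in> {..<CARD('a)^2 - 1}" "k \<in> {..<CARD('a)^2 - 1}"
      and "xpow_coords lam mu j = xpow_coords lam mu k"
    then show "j = k" using le[of j k] le[of k j] by (cases "j \<le> k") auto
  qed
qed

lemma range_xpow_coords: "range (xpow_coords lam mu) = - {(0, 0)}"
proof -
  have sub: "range (xpow_coords lam mu) \<subseteq> - {(0, 0)}"
    using xpow_coords_nonzero[OF lam_nonzero, of mu] by (auto dest: sym)
  have "card (xpow_coords lam mu ` {..<CARD('a)^2 - 1}) = CARD('a)^2 - 1"
    using card_image[OF inj_on_xpow_coords] by simp
  also have "\<dots> = card (- {(0::'a, 0::'a)})"
    by (simp add: Compl_eq_Diff_UNIV card_Diff_singleton power2_eq_square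
        flip: UNIV_Times_UNIV)
  finally have "xpow_coords lam mu ` {..<CARD('a)^2 - 1} = - {(0, 0)}"
    using sub by (intro card_subset_eq) auto
  then show ?thesis using sub by blast
qed

end

section \<open>The Singer cycle\<close>

text \<open>\<open>residue_mat \<lambda> \<mu> (a, b) = b\<cdot>1 + a\<cdot>X\<close> for the companion matrix \<open>X\<close>, the image of \<open>a x + b\<close>.\<close>

definition residue_mat :: "'a::comm_ring_1 \<Rightarrow> 'a \<Rightarrow> 'a \<times> 'a \<Rightarrow> 'a^2^2" where
  "residue_mat lam mu p = (case p of (a, b) \<Rightarrow> mat2 b a (- lam * a) (b - mu * a))"

lemma residue_mat_mult_companion:
  "residue_mat lam mu p ** mat2 0 1 (- lam) (- mu) = residue_mat lam mu (mult_x lam mu p)"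
  by (cases p) (simp add: residue_mat_def mat2_mult algebra_simps)

context primitive_quadratic
begin

abbreviation companion :: "'a^2^2" where
  "companion \<equiv> mat2 0 1 (- lam) (- mu)"

abbreviation xbar :: "('a^2^2) set" where
  "xbar \<equiv> pgl_of companion"

abbreviation singer :: "('a^2^2) set set" where
  "singer \<equiv> generate PGL2 {xbar}"

lemma det_companion: "det companion = lam"
  by (simp add: det_mat2)

lemma xbar_in_carrier: "xbar \<in> carrier PGL2"
  using lam_nonzero by (simp add: carrier_PGL2 GL2_def det_companion)

lemma xbar_pow: "xbar [^]\<^bsub>PGL2\<^esub> k = pgl_of (residue_mat lam mu (xpow_coords lam mu k))"
proof (induction k)
  case 0
  then show ?case by (simp add: one_PGL2 mat_1_eq_mat2 residue_mat_def)
next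
  case (Suc k)
  then show ?case
    by (simp add: PGL2_mult_pgl_of residue_mat_mult_companion xpow_coords_Suc)
qed

lemma det_residue_mat_xpow_coords: "det (residue_mat lam mu (xpow_coords lam mu k)) = lam ^ k"
proof (induction k)
  case 0
  then show ?case by (simp add: det_mat2 residue_mat_def)
next
  case (Suc k)
  then show ?case
    by (simp add: xpow_coords_Suc det_companion det_mul flip: residue_mat_mult_companion)
qed

lemma det_residue_mat_nonzero:
  assumes "p \<noteq> (0, 0)"
  shows "det (residue_mat lam mu p) \<noteq> 0"
proof -
  obtain k where "p = xpow_coords lam mu k"
    using assms range_xpow_coords by blast
  then show ?thesis
    using lam_nonzero by (simp add: det_residue_mat_xpow_coords)
qed

lemma singer_eq: "singer = (\<lambda>p. pgl_of (residue_mat lam mu p)) ` (- {(0, 0)})"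
proof -
  have "singer = range (\<lambda>k::nat. xbar [^]\<^bsub>PGL2\<^esub> k)"
    using group.generate_pow_on_finite_carrier[OF group_PGL2 finite_carrier_PGL2 xbar_in_carrier]
    by auto
  also have "\<dots> = (\<lambda>p. pgl_of (residue_mat lam mu p)) ` range (xpow_coords lam mu)"
    by (simp add: xbar_pow image_image)
  finally show ?thesis
    by (simp add: range_xpow_coords)
qed

lemma singer_inter_upper_tri: "singer \<inter> upper_tri_PGL2 \<subseteq> {\<one>\<^bsub>PGL2\<^esub>}"
proof
  fix c assume c: "c \<in> singer \<inter> upper_tri_PGL2"
  then have "c \<in> (\<lambda>p. pgl_of (residue_mat lam mu p)) ` (- {(0, 0)})"
    by (simp flip: singer_eq)
  then obtain p where "p \<noteq> (0, 0)" "c = pgl_of (residue_mat lam mu p)"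
    by blast
  moreover obtain a b where "p = (a, b)" by (cases p)
  ultimately have ab: "(a, b) \<noteq> (0, 0)" and c_eq: "c = pgl_of (residue_mat lam mu (a, b))"
    by blast+
  then have "- lam * a = 0"
    using c det_residue_mat_nonzero[OF ab] by (simp add: pgl_of_in_upper_tri_PGL2_iff residue_mat_def)
  then have "a = 0" "b \<noteq> 0" using lam_nonzero ab by auto
  then have "residue_mat lam mu (a, b) = smult_mat b (mat 1)"
    by (simp add: residue_mat_def mat_1_eq_mat2 smult_mat_mat2)
  then show "c \<in> {\<one>\<^bsub>PGL2\<^esub>}"
    using \<open>b \<noteq> 0\<close> by (simp add: c_eq one_PGL2 pgl_of_smult_mat)
qed

lemma PGL2_decomp_upper_tri_singer:
  assumes "M \<in> carrier PGL2"
  shows "\<exists>s\<in>upper_tri_PGL2. \<exists>c\<in>singer. M = s \<otimes>\<^bsub>PGL2\<^esub> c"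
proof -
  obtain A :: "'a^2^2" where M: "M = pgl_of A" and detA: "det A \<noteq> 0"
    using assms by (auto simp: carrier_PGL2 GL2_def)
  define a where "a = - A $ 2 $ 1 / lam"
  define L where "L = residue_mat lam mu (a, A $ 2 $ 2 + mu * a)"
  have bottom: "L $ 2 $ 1 = A $ 2 $ 1" "L $ 2 $ 2 = A $ 2 $ 2"
    using lam_nonzero by (simp_all add: L_def a_def residue_mat_def)
  have "(a, A $ 2 $ 2 + mu * a) \<noteq> (0, 0)"
    using detA lam_nonzero by (cases A rule: mat2_cases) (auto simp: a_def det_mat2)
  then have detL: "det L \<noteq> 0" and "pgl_of L \<in> singer"
    by (auto simp: L_def singer_eq det_residue_mat_nonzero)
  \<comment> \<open>\<open>L\<close> has the bottom row of \<open>A\<close>, so \<open>A L\<^sup>-\<^sup>1\<close> is upper triangular.\<close>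
  define B where "B = A ** adj2 L"
  have "(A ** adj2 L) $ 2 $ 1 = 0"
    by (cases A rule: mat2_cases, cases L rule: mat2_cases)
      (use bottom in \<open>simp add: adj2_def mat2_mult mult.commute\<close>)
  then have "pgl_of B \<in> upper_tri_PGL2"
    using detA detL by (simp add: B_def pgl_of_in_upper_tri_PGL2_iff det_mul det_adj2)
  moreover have "B ** L = smult_mat (det L) A"
    by (simp add: B_def adj2_mult smult_mat_mult_right flip: matrix_mul_assoc)
  then have "M = pgl_of B \<otimes>\<^bsub>PGL2\<^esub> pgl_of L"
    using detL by (simp add: M PGL2_mult_pgl_of pgl_of_smult_mat)
  ultimately show ?thesis using \<open>pgl_of L \<in> singer\<close> by blast
qed

section \<open>The stabilizer of \<open>x\<close>\<close>

text \<open>The stabilizer elements \<open>[[a, b], [0, d]]\<close>, \<open>\<lambda>b = \<mu>(a - d)\<close>, normalised to \<open>d = 1\<close>.\<close>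

definition stab_mat :: "'a \<Rightarrow> 'a^2^2" where
  "stab_mat u = mat2 u (mu * (u - 1) / lam) 0 1"

lemma stab_mat_mult: "stab_mat u ** stab_mat v = stab_mat (u * v)"
  using lam_nonzero by (simp add: stab_mat_def mat2_mult field_simps)

lemma det_stab_mat: "det (stab_mat u) = u"
  by (simp add: stab_mat_def det_mat2)

lemma pgl_of_eq_stab_mat_iff:
  assumes "det (mat2 a b 0 d) \<noteq> 0"
  shows "(\<exists>u. u \<noteq> 0 \<and> pgl_of (mat2 a b 0 d) = pgl_of (stab_mat u)) \<longleftrightarrow> lam * b = mu * (a - d)"
proof
  assume "\<exists>u. u \<noteq> 0 \<and> pgl_of (mat2 a b 0 d) = pgl_of (stab_mat u)"
  then obtain u c where "mat2 a b 0 d = smult_mat c (stab_mat u)"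
    by (auto simp: pgl_of_eq_iff)
  then show "lam * b = mu * (a - d)"
    using lam_nonzero by (simp add: stab_mat_def smult_mat_mat2 field_simps)
next
  assume rel: "lam * b = mu * (a - d)"
  have "a \<noteq> 0" "d \<noteq> 0" using assms by (auto simp: det_mat2)
  have "d * (mu * (a / d - 1) / lam) = mu * (a - d) / lam"
    using \<open>d \<noteq> 0\<close> lam_nonzero by (simp add: field_simps)
  also have "\<dots> = b"
    using lam_nonzero by (simp add: rel[symmetric])
  finally have "mat2 a b 0 d = smult_mat d (stab_mat (a / d))"
    using \<open>d \<noteq> 0\<close> by (simp add: stab_mat_def smult_mat_mat2)
  then show "\<exists>u. u \<noteq> 0 \<and> pgl_of (mat2 a b 0 d) = pgl_of (stab_mat u)"
    using \<open>a \<noteq> 0\<close> \<open>d \<noteq> 0\<close> by (intro exI[of _ "a / d"]) (simp add: pgl_of_smult_mat)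
qed

lemma stab_mat_in_upper_tri: "u \<noteq> 0 \<Longrightarrow> pgl_of (stab_mat u) \<in> upper_tri_PGL2"
  by (simp add: pgl_of_in_upper_tri_PGL2_iff det_stab_mat) (simp add: stab_mat_def)

lemma conj_xbar_in_upper_tri_iff:
  assumes "s \<in> upper_tri_PGL2"
  shows "xbar \<otimes>\<^bsub>PGL2\<^esub> s \<otimes>\<^bsub>PGL2\<^esub> inv\<^bsub>PGL2\<^esub> xbar \<in> upper_tri_PGL2
    \<longleftrightarrow> (\<exists>u. u \<noteq> 0 \<and> s = pgl_of (stab_mat u))"
proof -
  obtain A :: "'a^2^2" where "s = pgl_of A" "det A \<noteq> 0" "A $ 2 $ 1 = 0"
    using assms by (auto simp: upper_tri_PGL2_def GL2_def)
  moreover obtain a b c d where "A = mat2 a b c d" by (rule mat2_cases)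
  ultimately have s: "s = pgl_of (mat2 a b 0 d)" and det: "det (mat2 a b 0 d) \<noteq> 0"
    by auto
  have "xbar \<otimes>\<^bsub>PGL2\<^esub> s \<otimes>\<^bsub>PGL2\<^esub> inv\<^bsub>PGL2\<^esub> xbar
      = pgl_of (companion ** mat2 a b 0 d ** adj2 companion)"
    using lam_nonzero by (simp add: s inv_PGL2_pgl_of det_companion PGL2_mult_pgl_of)
  also have "companion ** mat2 a b 0 d ** adj2 companion
      = mat2 (lam * d) 0 (lam * (mu * (a - d) - lam * b)) (lam * a)"
    by (simp add: adj2_def mat2_mult algebra_simps)
  finally have "xbar \<otimes>\<^bsub>PGL2\<^esub> s \<otimes>\<^bsub>PGL2\<^esub> inv\<^bsub>PGL2\<^esub> xbar \<in> upper_tri_PGL2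
      \<longleftrightarrow> lam * b = mu * (a - d)"
    using det lam_nonzero by (auto simp: pgl_of_in_upper_tri_PGL2_iff det_mat2)
  then show ?thesis
    using pgl_of_eq_stab_mat_iff[OF det] by (simp add: s)
qed

lemma stabilizer_eq:
  "{s \<in> upper_tri_PGL2. twist PGL2 singer upper_tri_PGL2 xbar s = xbar}
    = (\<lambda>u. pgl_of (stab_mat u)) ` (- {0})"
proof -
  have "twist PGL2 singer upper_tri_PGL2 xbar s = xbar
      \<longleftrightarrow> xbar \<otimes>\<^bsub>PGL2\<^esub> s \<otimes>\<^bsub>PGL2\<^esub> inv\<^bsub>PGL2\<^esub> xbar \<in> upper_tri_PGL2"
    if "s \<in> upper_tri_PGL2" for s
  proof (rule group.twist_eq_self_iff[OF group_PGL2])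
    show "subgroup singer PGL2"
      by (intro group.generate_is_subgroup[OF group_PGL2]) (simp add: xbar_in_carrier)
    show "xbar \<in> singer" by (rule generate.incl) simp
    have "s \<in> carrier PGL2"
      using that subgroup.mem_carrier[OF subgroup_upper_tri_PGL2] by blast
    then have "xbar \<otimes>\<^bsub>PGL2\<^esub> s \<in> carrier PGL2"
      by (rule monoid.m_closed[OF group.is_monoid[OF group_PGL2] xbar_in_carrier])
    then show "\<exists>s'\<in>upper_tri_PGL2. \<exists>c'\<in>singer. xbar \<otimes>\<^bsub>PGL2\<^esub> s = s' \<otimes>\<^bsub>PGL2\<^esub> c'"
      by (rule PGL2_decomp_upper_tri_singer)
  qed (use that subgroup_upper_tri_PGL2 singer_inter_upper_tri in auto)
  then show ?thesis
    using conj_xbar_in_upper_tri_iff stab_mat_in_upper_tri by auto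
qed

lemma stab_mat_iso:
  "(\<lambda>u. pgl_of (stab_mat u))
    \<in> iso (Multiplicative_Group.mult_of (ring_of_type_algebra :: 'a ring))
          (PGL2\<lparr>carrier := (\<lambda>u. pgl_of (stab_mat u)) ` (- {0})\<rparr>)"
proof (rule isoI)
  show "(\<lambda>u. pgl_of (stab_mat u))
      \<in> hom (Multiplicative_Group.mult_of ring_of_type_algebra)
            (PGL2\<lparr>carrier := (\<lambda>u. pgl_of (stab_mat u)) ` (- {0})\<rparr>)"
    by (rule homI)
      (auto simp: Multiplicative_Group.mult_of_def ring_of_type_algebra_def PGL2_mult_pgl_of stab_mat_mult)
  have "inj_on (\<lambda>u. pgl_of (stab_mat u)) (- {0})"
  proof (rule inj_onI)
    fix u v assume "pgl_of (stab_mat u) = pgl_of (stab_mat v)"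
    then obtain c where "stab_mat u = smult_mat c (stab_mat v)"
      by (auto simp: pgl_of_eq_iff)
    then show "u = v" by (simp add: stab_mat_def smult_mat_mat2)
  qed
  then show "bij_betw (\<lambda>u. pgl_of (stab_mat u)) (carrier (Multiplicative_Group.mult_of ring_of_type_algebra))
      (carrier (PGL2\<lparr>carrier := (\<lambda>u. pgl_of (stab_mat u)) ` (- {0})\<rparr>))"
    by (simp add: bij_betw_def Multiplicative_Group.mult_of_def ring_of_type_algebra_def Compl_eq_Diff_UNIV)
qed

end

theorem mainTheorem5:
  fixes mu lam :: "'a::{finite,field}"
  assumes "primitive_poly [:lam, mu, 1:]"
  defines "xbar \<equiv> pgl_of (mat2 0 1 (- lam) (- mu))"
  defines "C \<equiv> generate PGL2 {xbar}"
  defines "S \<equiv> (upper_tri_PGL2 :: ('a ^2^2) set set)"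
  shows "PGL2 \<lparr> carrier := {s \<in> S. twist PGL2 C S xbar s = xbar} \<rparr>
           \<cong> integer_mod_group (CARD('a) - 1)"
proof -
  interpret primitive_quadratic lam mu by unfold_locales (rule assms)
  have "finite (carrier (ring_of_type_algebra :: 'a ring))"
    and "order (ring_of_type_algebra :: 'a ring) = CARD('a)"
    by (simp_all add: order_def ring_of_type_algebra_def)
  then have "integer_mod_group (CARD('a) - 1)
      \<cong> Multiplicative_Group.mult_of (ring_of_type_algebra :: 'a ring)"
    using field.integer_mod_group_iso_mult_of[OF field_from_type_algebra] by metis
  also have "\<dots> \<cong> PGL2\<lparr>carrier := {s \<in> S. twist PGL2 C S xbar s = xbar}\<rparr>"
    unfolding xbar_def C_def S_def stabilizer_eq by (rule is_isoI[OF stab_mat_iso])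
  finally show ?thesis
    by (rule group.iso_sym[OF group_integer_mod_group])
qed

end
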